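(* Let $t_1, t_2 \in \mathsf{Topo}$ and let $f: \mathsf{Addr}(t_1) \to \mathsf{Addr}(t_2)$ be an embedding. Then (1) if $t_1 = *$, then $t_2 = *$; and (2) if $t_1 = \mathsf{Node}(\vec t_1)$, then for each $1 \le i \le |\vec t_1|$ there exists an embedding $f_i$ of $t_1/i$ inside $t_2/f(i)$ satisfying $f(i\cdot\alpha) = f(i)\cdot f_i(\alpha)$ for all $\alpha \in \mathsf{Addr}(t_1/i)$.
   Context: Topologies: $\mathsf{Topo}$ is the smallest set with $*\in\mathsf{Topo}$ and $\mathsf{Node}(\vec t)\in\mathsf{Topo}$ for every $n\in\mathbb{N}$ and list $\vec t\in\mathsf{Topo}^n$ (entries $\vec t[i]$). Addresses: $\mathsf{Addr}(t)\subseteq\mathbb{N}^*$ is the smallest set with $\epsilon\in\mathsf{Addr}(t)$ and $i\cdot\alpha\in\mathsf{Addr}(\mathsf{Node}(\vec t))$ for $1\le i\le n$, $\alpha\in\mathsf{Addr}(\vec t[i])$. Subtrees: $t/\epsilon=t$, $\mathsf{Node}(\vec t)/(i\cdot\alpha)=\vec t[i]/\alpha$. An embedding of $t_1$ in $t_2$ is an injective $f:\mathsf{Addr}(t_1)\to\mathsf{Addr}(t_2)$ with $f(\epsilon)=\epsilon$; $t_2/f(\alpha)=*$ whenever $t_1/\alpha=*$; and for all $\alpha,\alpha'$, $\alpha$ is a prefix of $\alpha'$ iff $f(\alpha)$ is a prefix of $f(\alpha')$. *)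

theory Defs
  imports Main "HOL-Library.Sublist"
begin

datatype topo = Star | Node "topo list"

type_synonym addr = "nat list"

text \<open>Addresses, with children indexed from 1 as in the paper.\<close>
inductive_set Addr' :: "(topo \<times> addr) set" where
  A_nil: "(t, []) \<in> Addr'"
| A_cons: "1 \<le> i \<Longrightarrow> i \<le> length ts \<Longrightarrow> (ts ! (i - 1), \<alpha>) \<in> Addr'
            \<Longrightarrow> (Node ts, i # \<alpha>) \<in> Addr'"

definition addrs :: "topo \<Rightarrow> addr set" where
  "addrs t = {\<alpha>. (t, \<alpha>) \<in> Addr'}"

text \<open>Subtree t/alpha; only meaningful for alpha in addrs t.\<close>
fun subtree :: "topo \<Rightarrow> addr \<Rightarrow> topo" where
  "subtree t [] = t"
| "subtree (Node ts) (i # \<alpha>) = subtree (ts ! (i - 1)) \<alpha>"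
| "subtree Star (i # \<alpha>) = undefined"

definition embedding :: "topo \<Rightarrow> topo \<Rightarrow> (addr \<Rightarrow> addr) \<Rightarrow> bool" where
  "embedding t1 t2 f \<longleftrightarrow>
     f ` addrs t1 \<subseteq> addrs t2 \<and>
     inj_on f (addrs t1) \<and>
     f [] = [] \<and>
     (\<forall>\<alpha>\<in>addrs t1. subtree t1 \<alpha> = Star \<longrightarrow> subtree t2 (f \<alpha>) = Star) \<and>
     (\<forall>\<alpha>\<in>addrs t1. \<forall>\<alpha>'\<in>addrs t1. prefix \<alpha> \<alpha>' \<longleftrightarrow> prefix (f \<alpha>) (f \<alpha>'))"

end

theory Submission
  imports Defs
begin

text \<open>An embedding maps the address \<open>\<beta> @ \<alpha>\<close> below \<open>f \<beta>\<close>, because it preserves prefixes;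
  cutting off \<open>f \<beta>\<close> therefore gives an embedding of the subtree at \<open>\<beta>\<close> into the subtree at
  \<open>f \<beta>\<close>, and all clauses of the definition transfer along \<open>\<alpha> \<mapsto> \<beta> @ \<alpha>\<close>. The case
  \<open>t\<^sub>1 = *\<close> is the leaf condition at the root.\<close>

lemma Nil_in_addrs [simp]: "[] \<in> addrs t"
  by (simp add: addrs_def Addr'.A_nil)

lemma Cons_in_addrs_iff:
  "i # \<alpha> \<in> addrs t \<longleftrightarrow>
     (\<exists>ts. t = Node ts \<and> 1 \<le> i \<and> i \<le> length ts \<and> \<alpha> \<in> addrs (ts ! (i - 1)))"
  unfolding addrs_def by (auto elim: Addr'.cases intro: Addr'.A_cons)

lemma append_in_addrs_iff:
  assumes "\<beta> \<in> addrs t"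
  shows "\<beta> @ \<gamma> \<in> addrs t \<longleftrightarrow> \<gamma> \<in> addrs (subtree t \<beta>)"
  using assms by (induction \<beta> arbitrary: t) (auto simp: Cons_in_addrs_iff)

lemma subtree_append:
  assumes "\<beta> \<in> addrs t"
  shows "subtree t (\<beta> @ \<gamma>) = subtree (subtree t \<beta>) \<gamma>"
  using assms by (induction \<beta> arbitrary: t) (auto simp: Cons_in_addrs_iff)

lemma embedding_Star_imp_Star:
  assumes "embedding Star t f"
  shows "t = Star"
  using assms Nil_in_addrs[of Star] unfolding embedding_def by fastforce

lemma embedding_prefix_iff:
  assumes "embedding t1 t2 f" and "\<alpha> \<in> addrs t1" and "\<alpha>' \<in> addrs t1"
  shows "prefix \<alpha> \<alpha>' \<longleftrightarrow> prefix (f \<alpha>) (f \<alpha>')"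
  using assms unfolding embedding_def by blast

definition subembedding :: "(addr \<Rightarrow> addr) \<Rightarrow> addr \<Rightarrow> addr \<Rightarrow> addr" where
  "subembedding f \<beta> \<alpha> = drop (length (f \<beta>)) (f (\<beta> @ \<alpha>))"

lemma embedding_append_eq:
  assumes emb: "embedding t1 t2 f" and "\<beta> \<in> addrs t1" "\<beta> @ \<alpha> \<in> addrs t1"
  shows "f (\<beta> @ \<alpha>) = f \<beta> @ subembedding f \<beta> \<alpha>"
proof -
  have "prefix (f \<beta>) (f (\<beta> @ \<alpha>))"
    using embedding_prefix_iff[OF assms] by simp
  then show ?thesis
    unfolding subembedding_def by (metis append_eq_conv_conj prefix_def)
qed

lemma embedding_subembedding:
  assumes emb: "embedding t1 t2 f" and \<beta>: "\<beta> \<in> addrs t1"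
  shows "embedding (subtree t1 \<beta>) (subtree t2 (f \<beta>)) (subembedding f \<beta>)"
proof -
  let ?g = "subembedding f \<beta>"
  from emb have maps: "f ` addrs t1 \<subseteq> addrs t2" and inj: "inj_on f (addrs t1)"
    and leaf: "\<And>\<alpha>. \<alpha> \<in> addrs t1 \<Longrightarrow> subtree t1 \<alpha> = Star \<Longrightarrow> subtree t2 (f \<alpha>) = Star"
    unfolding embedding_def by blast+
  have f\<beta>: "f \<beta> \<in> addrs t2"
    using maps \<beta> by blast
  have mem: "\<beta> @ \<alpha> \<in> addrs t1" if "\<alpha> \<in> addrs (subtree t1 \<beta>)" for \<alpha>
    using append_in_addrs_iff[OF \<beta>] that by blast
  have split: "f (\<beta> @ \<alpha>) = f \<beta> @ ?g \<alpha>" if "\<alpha> \<in> addrs (subtree t1 \<beta>)" for \<alpha>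
    using embedding_append_eq[OF emb \<beta> mem[OF that]] .
  show ?thesis
    unfolding embedding_def
  proof (intro conjI ballI)
    show "?g ` addrs (subtree t1 \<beta>) \<subseteq> addrs (subtree t2 (f \<beta>))"
    proof
      fix y assume "y \<in> ?g ` addrs (subtree t1 \<beta>)"
      then obtain \<alpha> where \<alpha>: "\<alpha> \<in> addrs (subtree t1 \<beta>)" and y: "y = ?g \<alpha>"
        by blast
      have "f (\<beta> @ \<alpha>) \<in> addrs t2"
        using maps mem[OF \<alpha>] by blast
      then have "f \<beta> @ ?g \<alpha> \<in> addrs t2"
        by (simp add: split[OF \<alpha>])
      then show "y \<in> addrs (subtree t2 (f \<beta>))"
        using append_in_addrs_iff[OF f\<beta>] y by blast
    qed
    show "inj_on ?g (addrs (subtree t1 \<beta>))"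
    proof
      fix a b
      assume a: "a \<in> addrs (subtree t1 \<beta>)" and b: "b \<in> addrs (subtree t1 \<beta>)"
        and "?g a = ?g b"
      then have "f (\<beta> @ a) = f (\<beta> @ b)"
        using split by simp
      then have "\<beta> @ a = \<beta> @ b"
        using inj mem[OF a] mem[OF b] by (simp add: inj_on_eq_iff)
      then show "a = b" by simp
    qed
    show "?g [] = []"
      by (simp add: subembedding_def)
    show "subtree (subtree t1 \<beta>) \<alpha> = Star \<longrightarrow> subtree (subtree t2 (f \<beta>)) (?g \<alpha>) = Star"
      if \<alpha>: "\<alpha> \<in> addrs (subtree t1 \<beta>)" for \<alpha>
    proof
      assume "subtree (subtree t1 \<beta>) \<alpha> = Star"
      then have "subtree t1 (\<beta> @ \<alpha>) = Star"
        by (simp add: subtree_append[OF \<beta>])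
      then have "subtree t2 (f \<beta> @ ?g \<alpha>) = Star"
        using leaf[OF mem[OF \<alpha>]] split[OF \<alpha>] by simp
      then show "subtree (subtree t2 (f \<beta>)) (?g \<alpha>) = Star"
        by (simp add: subtree_append[OF f\<beta>])
    qed
    show "prefix a b \<longleftrightarrow> prefix (?g a) (?g b)"
      if a: "a \<in> addrs (subtree t1 \<beta>)" and b: "b \<in> addrs (subtree t1 \<beta>)" for a b
    proof -
      have "prefix a b \<longleftrightarrow> prefix (\<beta> @ a) (\<beta> @ b)"
        by simp
      also have "\<dots> \<longleftrightarrow> prefix (f (\<beta> @ a)) (f (\<beta> @ b))"
        using embedding_prefix_iff[OF emb mem[OF a] mem[OF b]] .
      also have "\<dots> \<longleftrightarrow> prefix (?g a) (?g b)"
        using split[OF a] split[OF b] by simp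
      finally show ?thesis .
    qed
  qed
qed

theorem lemma5p3:
  fixes t1 t2 :: topo and f :: "addr \<Rightarrow> addr"
  assumes "embedding t1 t2 f"
  shows "(t1 = Star \<longrightarrow> t2 = Star) \<and>
         (\<forall>ts. t1 = Node ts \<longrightarrow>
            (\<forall>i. 1 \<le> i \<and> i \<le> length ts \<longrightarrow>
               (\<exists>fi. embedding (subtree t1 [i]) (subtree t2 (f [i])) fi \<and>
                     (\<forall>\<alpha>\<in>addrs (subtree t1 [i]). f (i # \<alpha>) = f [i] @ fi \<alpha>))))"
proof (intro conjI impI allI)
  show "t2 = Star" if "t1 = Star"
    using assms embedding_Star_imp_Star that by blast
next
  fix ts i
  assume "t1 = Node ts" and "1 \<le> i \<and> i \<le> length ts"
  then have i: "[i] \<in> addrs t1"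
    by (simp add: Cons_in_addrs_iff)
  have "f (i # \<alpha>) = f [i] @ subembedding f [i] \<alpha>" if "\<alpha> \<in> addrs (subtree t1 [i])" for \<alpha>
    using embedding_append_eq[OF assms i, of \<alpha>] append_in_addrs_iff[OF i, of \<alpha>] that by simp
  with embedding_subembedding[OF assms i]
  show "\<exists>fi. embedding (subtree t1 [i]) (subtree t2 (f [i])) fi \<and>
                 (\<forall>\<alpha>\<in>addrs (subtree t1 [i]). f (i # \<alpha>) = f [i] @ fi \<alpha>)"
    by blast
qed

end
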